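(* In the setting of the context, for each white vertex $v\in\mathcal{V}_L^W$ define $$a_{v,\sigma}=\sum_{u\in R(v)}\Big(\sum_{j=1}^{N(v\to u)}(-1)^{|(v\to u)_j|-1}\Big)c_{u,\sigma},$$ where $(v\to u)_1,\dots,(v\to u)_{N(v\to u)}$ are the distinct directed paths from $v$ to $u$ and $|(v\to u)_j|$ is the number of vertices on the path. Then $\{a_{v,\sigma}^\dagger,b_{l,\sigma}\}=0$ for all $v\in\mathcal{V}_L^W$ and all $l=1,\dots,L$, $\{c^\dagger_{u,\sigma},a_{v,\sigma}\}=\delta_{u,v}$ for $u,v\in\mathcal{V}_L^W$, and the single-electron states $a^\dagger_{v,\sigma}\Phi_0$, $v\in\mathcal{V}_L^W$, form a basis of the zero-energy eigenspace of $H_{\mathrm{hop}}$ in the single-electron, spin-$\sigma$ sector; in particular $|\mathcal{V}_L^W|=|\mathcal{V}_L|-L$.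
   Context: Construction. Let $G_l=(V_l,E_l)$, $l=1,\dots,L$, be complete graphs with $|V_l|\ge 2$. In each $V_l$ one vertex $v_l^0$ is painted black, the others white. Set $\mathcal{G}_1=G_1$. For $l=2,\dots,L$: choose an integer $z_l$ with $0<z_l\le |V_l|-1$, choose $z_l$ white vertices of $V_l$ and identify each with a vertex (black or white; distinct with distinct) of $\mathcal{V}_{l-1}$; $\mathcal{V}_l=\mathcal{V}_{l-1}\cup V_l$ with these identifications and $\mathcal{E}_l=\mathcal{E}_{l-1}\cup E_l$ (edges joining the same two vertices merged). A white vertex identified with a black one becomes black; two identified white vertices stay white; $v_l^0$ is never identified with an earlier vertex. The black vertices of $\mathcal{G}_L$ are exactly $v_1^0,\dots,v_L^0$; $\mathcal{V}_L^W$ denotes the set of white vertices; $V_l$ is regarded as a subset of $\mathcal{V}_L$. Directed graph: the directed edge set is $\vec{\mathcal{E}}_L=\bigcup_{l=1}^L\{(v,v_l^0): v\in V_l\setminus\{v_l^0\}\}$ (with the identifications above). A directed path from $v$ to $u$ is a sequence $(v_0,\dots,v_k)$ with $v_0=v$, $v_k=u$, $(v_{j-1},v_j)\in\vec{\mathcal{E}}_L$; the trivial sequence $(v)$ counts as a path from $v$ to $v$. For $v\in\mathcal{V}_L^W$, $R(v)$ is the set of vertices reachable from $v$ by directed paths (including $v$) and $N(v\to u)$ is the number of directed paths from $v$ to $u$. Fermions $c_{v,\sigma}$ on $\mathcal{V}_L$ satisfy the canonical anticommutation relations; $\Phi_0$ is the vacuum; $b_{l,\sigma}=\sum_{v\in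 V_l}c_{v,\sigma}$; $H_{\mathrm{hop}}=t\sum_{l=1}^L\sum_\sigma b_{l,\sigma}^\dagger b_{l,\sigma}$ with $t>0$. *)

theory Defs
  imports Complex_Main "HOL-Library.Product_Lexorder"
begin

text \<open>After all identifications, every vertex lives in one vertex type 'v, and
  V l is the vertex set of the complete graph G_l regarded as a subset of the
  final vertex set; v0 l is its black vertex.\<close>

definition construction :: "nat \<Rightarrow> (nat \<Rightarrow> 'v set) \<Rightarrow> (nat \<Rightarrow> 'v) \<Rightarrow> bool" where
  "construction L V v0 \<longleftrightarrow>
     L \<ge> 1 \<and>
     (\<forall>l\<in>{1..L}. finite (V l) \<and> card (V l) \<ge> 2 \<and> v0 l \<in> V l) \<and>
     (\<forall>l\<in>{2..L}. v0 l \<notin> (\<Union>k\<in>{1..<l}. V k) \<and>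
                  V l \<inter> (\<Union>k\<in>{1..<l}. V k) \<noteq> {})"

definition all_vertices :: "nat \<Rightarrow> (nat \<Rightarrow> 'v set) \<Rightarrow> 'v set" where
  "all_vertices L V = (\<Union>l\<in>{1..L}. V l)"

definition white_vertices :: "nat \<Rightarrow> (nat \<Rightarrow> 'v set) \<Rightarrow> (nat \<Rightarrow> 'v) \<Rightarrow> 'v set" where
  "white_vertices L V v0 = all_vertices L V - v0 ` {1..L}"

definition dedge :: "nat \<Rightarrow> (nat \<Rightarrow> 'v set) \<Rightarrow> (nat \<Rightarrow> 'v) \<Rightarrow> 'v \<Rightarrow> 'v \<Rightarrow> bool" where
  "dedge L V v0 u w \<longleftrightarrow> (\<exists>l\<in>{1..L}. w = v0 l \<and> u \<in> V l \<and> u \<noteq> v0 l)"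

text \<open>Directed paths as nonempty vertex lists; the one-element list is the trivial path.\<close>
definition dpaths :: "nat \<Rightarrow> (nat \<Rightarrow> 'v set) \<Rightarrow> (nat \<Rightarrow> 'v) \<Rightarrow> 'v \<Rightarrow> 'v \<Rightarrow> 'v list set" where
  "dpaths L V v0 v u = {p. p \<noteq> [] \<and> hd p = v \<and> last p = u \<and> successively (dedge L V v0) p}"

definition reach :: "nat \<Rightarrow> (nat \<Rightarrow> 'v set) \<Rightarrow> (nat \<Rightarrow> 'v) \<Rightarrow> 'v \<Rightarrow> 'v set" where
  "reach L V v0 v = {u. dpaths L V v0 v u \<noteq> {}}"

definition npaths :: "nat \<Rightarrow> (nat \<Rightarrow> 'v set) \<Rightarrow> (nat \<Rightarrow> 'v) \<Rightarrow> 'v \<Rightarrow> 'v \<Rightarrow> nat" where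
  "npaths L V v0 v u = card (dpaths L V v0 v u)"

definition path_sign_sum :: "nat \<Rightarrow> (nat \<Rightarrow> 'v set) \<Rightarrow> (nat \<Rightarrow> 'v) \<Rightarrow> 'v \<Rightarrow> 'v \<Rightarrow> int" where
  "path_sign_sum L V v0 v u = (\<Sum>p\<in>dpaths L V v0 v u. (-1) ^ (length p - 1))"

text \<open>Modes are of a linearly ordered type 'm.  A state is a coefficient function on
  sets of occupied modes, w.r.t. the basis c^dag_{x1} ... c^dag_{xk} Phi0 with x1 < ... < xk.\<close>

type_synonym 'm fock = "'m set \<Rightarrow> complex"

definition fsign :: "'m::linorder \<Rightarrow> 'm set \<Rightarrow> complex" where
  "fsign x S = (-1) ^ card {y\<in>S. y < x}"

definition ann :: "'m::linorder \<Rightarrow> 'm fock \<Rightarrow> 'm fock" where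
  "ann x \<psi> = (\<lambda>S. if x \<in> S then 0 else fsign x S * \<psi> (insert x S))"

definition cre :: "'m::linorder \<Rightarrow> 'm fock \<Rightarrow> 'm fock" where
  "cre x \<psi> = (\<lambda>S. if x \<in> S then fsign x (S - {x}) * \<psi> (S - {x}) else 0)"

definition ann_comb :: "('m::{linorder,finite} \<Rightarrow> complex) \<Rightarrow> 'm fock \<Rightarrow> 'm fock" where
  "ann_comb \<alpha> \<psi> = (\<lambda>S. \<Sum>x\<in>UNIV. \<alpha> x * ann x \<psi> S)"

definition cre_comb :: "('m::{linorder,finite} \<Rightarrow> complex) \<Rightarrow> 'm fock \<Rightarrow> 'm fock" where
  "cre_comb \<alpha> \<psi> = (\<lambda>S. \<Sum>x\<in>UNIV. cnj (\<alpha> x) * cre x \<psi> S)"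

definition anticomm :: "('m fock \<Rightarrow> 'm fock) \<Rightarrow> ('m fock \<Rightarrow> 'm fock) \<Rightarrow> 'm fock \<Rightarrow> 'm fock" where
  "anticomm A B = (\<lambda>\<psi> S. A (B \<psi>) S + B (A \<psi>) S)"

definition vacuum :: "'m fock" where
  "vacuum = (\<lambda>S. if S = {} then 1 else 0)"

text \<open>Modes are (vertex, spin); spin is represented by bool.\<close>

definition b_coef :: "(nat \<Rightarrow> 'v set) \<Rightarrow> nat \<Rightarrow> bool \<Rightarrow> 'v \<times> bool \<Rightarrow> complex" where
  "b_coef V l \<sigma> = (\<lambda>(u, \<tau>). if \<tau> = \<sigma> \<and> u \<in> V l then 1 else 0)"

definition b_op :: "(nat \<Rightarrow> 'v set) \<Rightarrow> nat \<Rightarrow> bool \<Rightarrow> ('v::{finite,linorder} \<times> bool) fock \<Rightarrow> ('v \<times> bool) fock" where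
  "b_op V l \<sigma> = ann_comb (b_coef V l \<sigma>)"

definition b_dag :: "(nat \<Rightarrow> 'v set) \<Rightarrow> nat \<Rightarrow> bool \<Rightarrow> ('v::{finite,linorder} \<times> bool) fock \<Rightarrow> ('v \<times> bool) fock" where
  "b_dag V l \<sigma> = cre_comb (b_coef V l \<sigma>)"

definition H_hop :: "real \<Rightarrow> nat \<Rightarrow> (nat \<Rightarrow> 'v set) \<Rightarrow> ('v::{finite,linorder} \<times> bool) fock \<Rightarrow> ('v \<times> bool) fock" where
  "H_hop t L V \<psi> = (\<lambda>S. complex_of_real t *
      (\<Sum>l\<in>{1..L}. \<Sum>\<sigma>\<in>UNIV. b_dag V l \<sigma> (b_op V l \<sigma> \<psi>) S))"

definition a_coef :: "nat \<Rightarrow> (nat \<Rightarrow> 'v set) \<Rightarrow> (nat \<Rightarrow> 'v) \<Rightarrow> 'v \<Rightarrow> bool \<Rightarrow> 'v \<times> bool \<Rightarrow> complex" where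
  "a_coef L V v0 v \<sigma> = (\<lambda>(u, \<tau>). if \<tau> = \<sigma> \<and> u \<in> reach L V v0 v
       then of_int (path_sign_sum L V v0 v u) else 0)"

definition a_op :: "nat \<Rightarrow> (nat \<Rightarrow> 'v set) \<Rightarrow> (nat \<Rightarrow> 'v) \<Rightarrow> 'v \<Rightarrow> bool \<Rightarrow> ('v::{finite,linorder} \<times> bool) fock \<Rightarrow> ('v \<times> bool) fock" where
  "a_op L V v0 v \<sigma> = ann_comb (a_coef L V v0 v \<sigma>)"

definition a_dag :: "nat \<Rightarrow> (nat \<Rightarrow> 'v set) \<Rightarrow> (nat \<Rightarrow> 'v) \<Rightarrow> 'v \<Rightarrow> bool \<Rightarrow> ('v::{finite,linorder} \<times> bool) fock \<Rightarrow> ('v \<times> bool) fock" where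
  "a_dag L V v0 v \<sigma> = cre_comb (a_coef L V v0 v \<sigma>)"

definition one_electron_sector :: "nat \<Rightarrow> (nat \<Rightarrow> 'v set) \<Rightarrow> bool \<Rightarrow> ('v \<times> bool) fock set" where
  "one_electron_sector L V \<sigma> =
     {\<psi>. \<forall>S. \<psi> S \<noteq> 0 \<longrightarrow> (\<exists>u\<in>all_vertices L V. S = {(u, \<sigma>)})}"

definition zero_energy_space :: "real \<Rightarrow> nat \<Rightarrow> (nat \<Rightarrow> 'v set) \<Rightarrow> bool \<Rightarrow> ('v::{finite,linorder} \<times> bool) fock set" where
  "zero_energy_space t L V \<sigma> = {\<psi> \<in> one_electron_sector L V \<sigma>. H_hop t L V \<psi> = (\<lambda>S. 0)}"

definition is_basis_of :: "'i set \<Rightarrow> ('i \<Rightarrow> 'm fock) \<Rightarrow> 'm fock set \<Rightarrow> bool" where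
  "is_basis_of I f E \<longleftrightarrow>
     (\<forall>i\<in>I. f i \<in> E) \<and>
     (\<forall>\<beta>. (\<forall>S. (\<Sum>i\<in>I. \<beta> i * f i S) = 0) \<longrightarrow> (\<forall>i\<in>I. \<beta> i = 0)) \<and>
     (\<forall>\<psi>\<in>E. \<exists>\<beta>. \<psi> = (\<lambda>S. \<Sum>i\<in>I. \<beta> i * f i S))"

end

theory Submission
  imports Defs
begin

text \<open>Write P(v, u) for the signed path count in a_{v,sigma}. The only path ending at a white
  vertex is the trivial one, and the paths ending at v0 l are the paths ending at the other vertices
  of V l extended by one edge, which flips their sign. Hence P(v, -) is the indicator of v on white
  vertices and sums to zero over every V l: the first fact gives the canonical anticommutator with
  c_{u,sigma}, the second the vanishing anticommutator with b_{l,sigma}. A one-electron state has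
  energy t times the sum over l of the squared moduli of its sums over V l, so it is a zero mode
  exactly when all these block sums vanish, and then it is recovered from its values on white
  vertices as the combination of the P(v, -), by induction on the index of the black vertex.\<close>

section \<open>Fermionic operators\<close>

lemma fsign_mult_self [simp]: "fsign x S * fsign x S = 1"
  unfolding fsign_def by (simp flip: power_mult_distrib)

lemma fsign_insert:
  fixes y z :: "'m::{linorder,finite}"
  assumes "z \<notin> T" "z \<noteq> y"
  shows "fsign y (insert z T) = (if z < y then - fsign y T else fsign y T)"
proof (cases "z < y")
  case True
  then have "{w\<in>insert z T. w < y} = insert z {w\<in>T. w < y}" by auto
  then show ?thesis using True assms unfolding fsign_def by simp
next
  case False
  then have "{w\<in>insert z T. w < y} = {w\<in>T. w < y}" by auto
  then show ?thesis using False unfolding fsign_def by simp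
qed

lemma fsign_exchange:
  fixes x y :: "'m::{linorder,finite}"
  assumes "x \<noteq> y" "x \<notin> T" "y \<notin> T"
  shows "fsign y (insert x T) * fsign x (insert y T) = - (fsign x T * fsign y T)"
  using assms by (cases "x < y") (auto simp: fsign_insert)

lemma cre_ann_same: "cre x (ann x \<psi>) S + ann x (cre x \<psi>) S = \<psi> S"
proof (cases "x \<in> S")
  case True
  then have "cre x (ann x \<psi>) S = fsign x (S - {x}) * fsign x (S - {x}) * \<psi> S"
    by (simp add: cre_def ann_def insert_absorb)
  then show ?thesis using True by (simp add: ann_def)
next
  case False
  then have "ann x (cre x \<psi>) S = fsign x S * fsign x S * \<psi> S"
    by (simp add: cre_def ann_def)
  then show ?thesis using False by (simp add: cre_def)
qed

lemma cre_ann_distinct: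
  fixes x y :: "'m::{linorder,finite}"
  assumes "x \<noteq> y"
  shows "cre x (ann y \<psi>) S + ann y (cre x \<psi>) S = 0"
proof (cases "x \<in> S \<and> y \<notin> S")
  case True
  define T where "T = S - {x}"
  have S: "S = insert x T" "x \<notin> T" "y \<notin> T"
    using True unfolding T_def by auto
  have "cre x (ann y \<psi>) S = fsign x T * fsign y T * \<psi> (insert y T)"
    using S assms by (simp add: cre_def ann_def)
  moreover have "ann y (cre x \<psi>) S = fsign y (insert x T) * fsign x (insert y T) * \<psi> (insert y T)"
    using S assms by (simp add: cre_def ann_def insert_commute)
  ultimately show ?thesis
    using fsign_exchange[OF assms S(2,3)] by simp
next
  case False
  have "cre x (ann y \<psi>) S = 0"
  proof (cases "x \<in> S")
    case True
    then have "y \<in> S - {x}" using False assms by auto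
    then show ?thesis using True by (simp add: cre_def ann_def)
  qed (simp add: cre_def)
  moreover have "ann y (cre x \<psi>) S = 0"
  proof (cases "y \<in> S")
    case False
    then have "x \<notin> insert y S" using \<open>\<not> (x \<in> S \<and> y \<notin> S)\<close> assms by auto
    then show ?thesis using False by (simp add: cre_def ann_def)
  qed (simp add: ann_def)
  ultimately show ?thesis by simp
qed

lemma anticomm_cre_ann:
  fixes x y :: "'m::{linorder,finite}"
  shows "anticomm (cre x) (ann y) \<psi> S = (if x = y then \<psi> S else 0)"
  unfolding anticomm_def by (simp add: cre_ann_same cre_ann_distinct)

lemma cre_sum: "cre y (\<lambda>T. \<Sum>x\<in>A. c x * g x T) S = (\<Sum>x\<in>A. c x * cre y (g x) S)"
  unfolding cre_def by (simp add: sum_distrib_left algebra_simps)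

lemma ann_sum: "ann y (\<lambda>T. \<Sum>x\<in>A. c x * g x T) S = (\<Sum>x\<in>A. c x * ann y (g x) S)"
  unfolding ann_def by (simp add: sum_distrib_left algebra_simps)

lemma anticomm_cre_ann_comb:
  fixes y :: "'m::{linorder,finite}"
  shows "anticomm (cre y) (ann_comb \<beta>) \<psi> S = \<beta> y * \<psi> S"
proof -
  have "anticomm (cre y) (ann_comb \<beta>) \<psi> S = (\<Sum>x\<in>UNIV. \<beta> x * anticomm (cre y) (ann x) \<psi> S)"
    unfolding anticomm_def ann_comb_def cre_sum by (simp add: sum.distrib algebra_simps)
  also have "\<dots> = \<beta> y * \<psi> S"
    by (simp add: anticomm_cre_ann if_distrib cong: if_cong)
  finally show ?thesis .
qed

lemma anticomm_cre_comb_ann_comb: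
  fixes \<alpha> \<beta> :: "'m::{linorder,finite} \<Rightarrow> complex"
  shows "anticomm (cre_comb \<alpha>) (ann_comb \<beta>) \<psi> S = (\<Sum>x\<in>UNIV. cnj (\<alpha> x) * \<beta> x) * \<psi> S"
proof -
  have "ann_comb \<beta> (cre_comb \<alpha> \<psi>) S = (\<Sum>x\<in>UNIV. \<Sum>y\<in>UNIV. cnj (\<alpha> y) * (\<beta> x * ann x (cre y \<psi>) S))"
    unfolding ann_comb_def cre_comb_def ann_sum by (simp only: sum_distrib_left mult.left_commute)
  also have "\<dots> = (\<Sum>y\<in>UNIV. \<Sum>x\<in>UNIV. cnj (\<alpha> y) * (\<beta> x * ann x (cre y \<psi>) S))"
    by (rule sum.swap)
  also have "\<dots> = (\<Sum>y\<in>UNIV. cnj (\<alpha> y) * ann_comb \<beta> (cre y \<psi>) S)"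
    by (simp only: ann_comb_def sum_distrib_left)
  finally have ann_cre: "ann_comb \<beta> (cre_comb \<alpha> \<psi>) S = \<dots>" .
  have "anticomm (cre_comb \<alpha>) (ann_comb \<beta>) \<psi> S
      = (\<Sum>y\<in>UNIV. cnj (\<alpha> y) * anticomm (cre y) (ann_comb \<beta>) \<psi> S)"
    unfolding anticomm_def ann_cre by (simp only: cre_comb_def sum.distrib distrib_left)
  also have "\<dots> = (\<Sum>y\<in>UNIV. cnj (\<alpha> y) * \<beta> y) * \<psi> S"
    by (simp only: anticomm_cre_ann_comb mult.assoc sum_distrib_right)
  finally show ?thesis .
qed

lemma cre_comb_scale: "cre_comb \<alpha> (\<lambda>T. c * \<psi> T) S = c * cre_comb \<alpha> \<psi> S"
  unfolding cre_comb_def cre_def by (auto simp: sum_distrib_left intro!: sum.cong)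

lemma cre_vacuum: "cre x vacuum S = (if S = {x} then 1 else 0)"
  unfolding cre_def vacuum_def fsign_def by auto

lemma cre_comb_vacuum_singleton:
  fixes \<alpha> :: "'m::{linorder,finite} \<Rightarrow> complex"
  shows "cre_comb \<alpha> vacuum {y} = cnj (\<alpha> y)"
  unfolding cre_comb_def cre_vacuum by (simp add: if_distrib cong: if_cong)

lemma cre_comb_vacuum_not_singleton:
  fixes \<alpha> :: "'m::{linorder,finite} \<Rightarrow> complex"
  assumes "\<forall>y. S \<noteq> {y}"
  shows "cre_comb \<alpha> vacuum S = 0"
  unfolding cre_comb_def cre_vacuum using assms by simp

section \<open>The one-electron sector\<close>

lemma sum_fixed_spin:
  fixes h :: "'v::finite \<Rightarrow> 'a::comm_monoid_add" and \<sigma> :: bool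
  shows "(\<Sum>x\<in>UNIV. if snd x = \<sigma> \<and> fst x \<in> A then h (fst x) else 0) = (\<Sum>u\<in>A. h u)"
proof -
  have "(\<Sum>x\<in>UNIV. if snd x = \<sigma> \<and> fst x \<in> A then h (fst x) else 0)
      = (\<Sum>x\<in>(\<lambda>u. (u, \<sigma>)) ` A. if snd x = \<sigma> \<and> fst x \<in> A then h (fst x) else 0)"
    by (rule sum.mono_neutral_right) auto
  also have "\<dots> = (\<Sum>u\<in>A. h u)"
    by (subst sum.reindex) (auto intro: inj_onI)
  finally show ?thesis .
qed

lemma one_electron_sector_other_spin:
  "\<psi> \<in> one_electron_sector L V \<sigma> \<Longrightarrow> \<tau> \<noteq> \<sigma> \<Longrightarrow> \<psi> {(u, \<tau>)} = 0"
  unfolding one_electron_sector_def by auto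

lemma one_electron_sector_not_singleton:
  "\<psi> \<in> one_electron_sector L V \<sigma> \<Longrightarrow> \<forall>y. S \<noteq> {y} \<Longrightarrow> \<psi> S = 0"
  unfolding one_electron_sector_def by blast

lemma ann_one_electron:
  assumes "\<psi> \<in> one_electron_sector L V \<sigma>"
  shows "ann x \<psi> S = \<psi> {x} * vacuum S"
proof (cases "x \<in> S")
  case True
  then show ?thesis by (auto simp: ann_def vacuum_def)
next
  case False
  show ?thesis
  proof (cases "S = {}")
    case True
    then show ?thesis by (simp add: ann_def vacuum_def fsign_def)
  next
    case nonempty: False
    have "insert x S \<noteq> {y}" for y
    proof
      assume "insert x S = {y}"
      then have "S \<subseteq> {x}" by auto
      then show False using False nonempty by auto
    qed
    then show ?thesis
      using False nonempty one_electron_sector_not_singleton[OF assms] by (simp add: ann_def vacuum_def)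
  qed
qed

lemma b_op_one_electron:
  fixes V :: "nat \<Rightarrow> 'v::{finite,linorder} set"
  assumes "\<psi> \<in> one_electron_sector L V \<sigma>"
  shows "b_op V l \<tau> \<psi> S = (if \<tau> = \<sigma> then (\<Sum>w\<in>V l. \<psi> {(w, \<sigma>)}) else 0) * vacuum S"
proof -
  have "(\<Sum>x\<in>UNIV. b_coef V l \<tau> x * \<psi> {x})
      = (\<Sum>x\<in>UNIV. if snd x = \<tau> \<and> fst x \<in> V l then \<psi> {(fst x, \<tau>)} else 0)"
    by (rule sum.cong) (auto simp: b_coef_def)
  also have "\<dots> = (\<Sum>w\<in>V l. \<psi> {(w, \<tau>)})"
    by (rule sum_fixed_spin)
  also have "\<dots> = (if \<tau> = \<sigma> then (\<Sum>w\<in>V l. \<psi> {(w, \<sigma>)}) else 0)"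
    using one_electron_sector_other_spin[OF assms] by simp
  finally have coef: "(\<Sum>x\<in>UNIV. b_coef V l \<tau> x * \<psi> {x}) = \<dots>" .
  have "b_op V l \<tau> \<psi> S = (\<Sum>x\<in>UNIV. b_coef V l \<tau> x * \<psi> {x}) * vacuum S"
    unfolding b_op_def ann_comb_def ann_one_electron[OF assms] by (simp add: sum_distrib_right mult.assoc)
  then show ?thesis unfolding coef .
qed

lemma b_dag_vacuum_singleton:
  "b_dag V l \<sigma> vacuum {(u, \<tau>)} = (if \<tau> = \<sigma> \<and> u \<in> V l then 1 else 0)"
  unfolding b_dag_def cre_comb_vacuum_singleton by (simp add: b_coef_def)

lemma H_hop_one_electron:
  fixes V :: "nat \<Rightarrow> 'v::{finite,linorder} set"
  assumes "\<psi> \<in> one_electron_sector L V \<sigma>"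
  shows "H_hop t L V \<psi> S = complex_of_real t *
     (\<Sum>l\<in>{1..L}. (\<Sum>w\<in>V l. \<psi> {(w, \<sigma>)}) * b_dag V l \<sigma> vacuum S)"
proof -
  have "b_dag V l \<tau> (b_op V l \<tau> \<psi>) S
      = (if \<tau> = \<sigma> then (\<Sum>w\<in>V l. \<psi> {(w, \<sigma>)}) * b_dag V l \<sigma> vacuum S else 0)" for l \<tau>
    unfolding b_dag_def b_op_one_electron[OF assms, abs_def] cre_comb_scale by simp
  then show ?thesis unfolding H_hop_def by simp
qed

lemma sum_mult_cnj_eq_0_imp:
  fixes s :: "'i \<Rightarrow> complex"
  assumes "finite I" "(\<Sum>l\<in>I. s l * cnj (s l)) = 0"
  shows "\<forall>l\<in>I. s l = 0"
proof -
  have "complex_of_real (\<Sum>l\<in>I. (cmod (s l))\<^sup>2) = 0"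
    using assms(2) by (simp only: of_real_sum complex_norm_square)
  then have "(\<Sum>l\<in>I. (cmod (s l))\<^sup>2) = 0" by (simp only: of_real_eq_0_iff)
  then show ?thesis using assms(1) by (simp add: sum_nonneg_eq_0_iff)
qed

lemma sum_cnj_mult_incidence:
  fixes f :: "'v::finite \<Rightarrow> complex" and s :: "'i \<Rightarrow> complex"
  shows "(\<Sum>u\<in>UNIV. cnj (f u) * (\<Sum>l\<in>I. if u \<in> V l then s l else 0))
     = (\<Sum>l\<in>I. s l * cnj (\<Sum>u\<in>V l. f u))"
proof -
  have "(\<Sum>u\<in>UNIV. cnj (f u) * (\<Sum>l\<in>I. if u \<in> V l then s l else 0))
      = (\<Sum>l\<in>I. \<Sum>u\<in>UNIV. if u \<in> V l then cnj (f u) * s l else 0)"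
    by (simp add: sum_distrib_left sum.swap[where A=UNIV] if_distrib cong: if_cong)
  also have "\<dots> = (\<Sum>l\<in>I. \<Sum>u\<in>V l. cnj (f u) * s l)"
    by (simp add: sum.If_cases Int_absorb1)
  finally show ?thesis by (simp add: sum_distrib_left mult.commute)
qed

lemma zero_energy_space_iff:
  fixes V :: "nat \<Rightarrow> 'v::{finite,linorder} set"
  assumes "t > 0"
  shows "\<psi> \<in> zero_energy_space t L V \<sigma> \<longleftrightarrow>
    \<psi> \<in> one_electron_sector L V \<sigma> \<and> (\<forall>l\<in>{1..L}. (\<Sum>w\<in>V l. \<psi> {(w, \<sigma>)}) = 0)"
proof (cases "\<psi> \<in> one_electron_sector L V \<sigma>")
  case sec: True
  define s where "s l = (\<Sum>w\<in>V l. \<psi> {(w, \<sigma>)})" for l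
  have H: "H_hop t L V \<psi> {(u, \<sigma>)} = complex_of_real t * (\<Sum>l\<in>{1..L}. if u \<in> V l then s l else 0)" for u
    unfolding H_hop_one_electron[OF sec] b_dag_vacuum_singleton s_def by (simp add: if_distrib cong: if_cong)
  have "\<psi> \<in> zero_energy_space t L V \<sigma> \<longleftrightarrow> H_hop t L V \<psi> = (\<lambda>S. 0)"
    using sec by (simp add: zero_energy_space_def)
  also have "\<dots> \<longleftrightarrow> (\<forall>l\<in>{1..L}. s l = 0)"
  proof
    assume H0: "H_hop t L V \<psi> = (\<lambda>S. 0)"
    have "(\<Sum>l\<in>{1..L}. if u \<in> V l then s l else 0) = 0" for u
      using H[of u] H0 assms by simp
    then have "(\<Sum>u\<in>UNIV. cnj (\<psi> {(u, \<sigma>)}) * (\<Sum>l\<in>{1..L}. if u \<in> V l then s l else 0)) = 0"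
      by simp
    \<comment> \<open>pairing \<open>H_hop t L V \<psi>\<close> with \<open>\<psi>\<close> gives t times the sum of the \<open>\<bar>s l\<bar>\<^sup>2\<close>\<close>
    then have "(\<Sum>l\<in>{1..L}. s l * cnj (s l)) = 0"
      unfolding sum_cnj_mult_incidence s_def .
    then show "\<forall>l\<in>{1..L}. s l = 0" by (rule sum_mult_cnj_eq_0_imp[rotated]) simp
  next
    assume "\<forall>l\<in>{1..L}. s l = 0"
    then show "H_hop t L V \<psi> = (\<lambda>S. 0)"
      unfolding H_hop_one_electron[OF sec, abs_def] s_def[symmetric] by simp
  qed
  finally show ?thesis using sec unfolding s_def by simp
qed (simp add: zero_energy_space_def)

section \<open>Directed paths\<close>

locale graph_construction =
  fixes L :: nat and V :: "nat \<Rightarrow> 'v::finite set" and v0 :: "nat \<Rightarrow> 'v"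
  assumes construction: "construction L V v0"
begin

abbreviation black :: "'v set" where
  "black \<equiv> v0 ` {1..L}"

lemma v0_mem_V: "l \<in> {1..L} \<Longrightarrow> v0 l \<in> V l"
  using construction unfolding construction_def by auto

lemma v0_mem_V_imp_less:
  assumes "l \<in> {1..L}" "k \<in> {1..L}" "v0 k \<in> V l" "k \<noteq> l"
  shows "k < l"
proof (rule ccontr)
  assume "\<not> k < l"
  then have "k \<in> {2..L}" "l \<in> {1..<k}" using assms by auto
  then have "v0 k \<notin> V l" using construction unfolding construction_def by blast
  then show False using assms by simp
qed

lemma inj_on_v0: "inj_on v0 {1..L}"
proof (rule inj_onI, rule ccontr)
  fix k l assume kl: "k \<in> {1..L}" "l \<in> {1..L}" "v0 k = v0 l" "k \<noteq> l"
  then have "k < l" using v0_mem_V_imp_less[of l k] v0_mem_V[of l] by simp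
  moreover have "l < k" using kl v0_mem_V_imp_less[of k l] v0_mem_V[of k] by auto
  ultimately show False by simp
qed

lemma dedge_v0_iff: "l \<in> {1..L} \<Longrightarrow> dedge L V v0 w (v0 l) \<longleftrightarrow> w \<in> V l \<and> w \<noteq> v0 l"
  unfolding dedge_def using inj_on_v0 by (auto dest: inj_onD)

lemma dedge_target_black: "dedge L V v0 w u \<Longrightarrow> u \<in> black"
  unfolding dedge_def by auto

text \<open>Every edge ends at a black vertex whose index exceeds that of its (black) source,
  so the index of black vertices, extended by 0 to white ones, strictly increases along paths.\<close>
definition rank :: "'v \<Rightarrow> nat" where
  "rank x = (if x \<in> black then the_inv_into {1..L} v0 x else 0)"

lemma rank_v0: "l \<in> {1..L} \<Longrightarrow> rank (v0 l) = l"
  unfolding rank_def using the_inv_into_f_f[OF inj_on_v0] by simp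

lemma dedge_rank_less:
  assumes "dedge L V v0 a b"
  shows "rank a < rank b"
proof -
  obtain l where l: "l \<in> {1..L}" "b = v0 l" "a \<in> V l" "a \<noteq> v0 l"
    using assms unfolding dedge_def by auto
  show ?thesis
  proof (cases "a \<in> black")
    case True
    then obtain k where k: "k \<in> {1..L}" "a = v0 k" by auto
    then have "k < l" using v0_mem_V_imp_less[OF l(1) k(1)] l by auto
    then show ?thesis using k l rank_v0 by simp
  next
    case False
    then show ?thesis using l rank_v0 by (simp add: rank_def)
  qed
qed

lemma dpath_distinct:
  assumes "successively (dedge L V v0) p"
  shows "distinct p"
proof -
  have "successively (\<lambda>a b. rank a < rank b) p"
    using assms by (rule successively_mono) (use dedge_rank_less in auto)
  then have "sorted_wrt (<) (map rank p)"
    by (simp add: successively_conv_sorted_wrt transp_def sorted_wrt_map)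
  then show ?thesis by (simp add: strict_sorted_iff distinct_map)
qed

lemma finite_dpaths: "finite (dpaths L V v0 v u)"
proof (rule finite_subset)
  show "dpaths L V v0 v u \<subseteq> {p. set p \<subseteq> UNIV \<and> length p \<le> card (UNIV :: 'v set)}"
  proof
    fix p assume "p \<in> dpaths L V v0 v u"
    then have "length p = card (set p)"
      using dpath_distinct by (simp add: dpaths_def distinct_card)
    also have "\<dots> \<le> card (UNIV :: 'v set)" by (rule card_mono) auto
    finally show "p \<in> {p. set p \<subseteq> UNIV \<and> length p \<le> card (UNIV :: 'v set)}" by simp
  qed
qed (rule finite_lists_length_le, simp)

lemma dpaths_to_white:
  assumes "u \<notin> black"
  shows "dpaths L V v0 v u = (if v = u then {[u]} else {})"
proof -
  have "p = [u]" if "p \<in> dpaths L V v0 v u" for p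
  proof (rule ccontr)
    assume "p \<noteq> [u]"
    have p: "p \<noteq> []" "last p = u" "successively (dedge L V v0) p"
      using that unfolding dpaths_def by auto
    then have pb: "p = butlast p @ [u]" by (metis append_butlast_last_id)
    then have "butlast p \<noteq> []" using \<open>p \<noteq> [u]\<close> by auto
    then obtain q w where "butlast p = q @ [w]" by (metis append_butlast_last_id)
    then have "p = q @ [w, u]" using pb by simp
    then have "dedge L V v0 w u" using p(3) by (simp add: successively_append_iff)
    then show False using dedge_target_black assms by blast
  qed
  then have "dpaths L V v0 v u \<subseteq> {[u]}" by blast
  moreover have "[u] \<in> dpaths L V v0 v u \<longleftrightarrow> v = u" by (auto simp: dpaths_def)
  ultimately show ?thesis by auto
qed

lemma dpaths_to_v0:
  assumes l: "l \<in> {1..L}" and ne: "v \<noteq> v0 l"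
  shows "dpaths L V v0 v (v0 l) = (\<lambda>q. q @ [v0 l]) ` (\<Union>w\<in>V l - {v0 l}. dpaths L V v0 v w)"
proof (intro equalityI subsetI)
  fix p assume "p \<in> dpaths L V v0 v (v0 l)"
  then have p: "p \<noteq> []" "hd p = v" "last p = v0 l" "successively (dedge L V v0) p"
    unfolding dpaths_def by auto
  define q where "q = butlast p"
  have pq: "p = q @ [v0 l]" using p unfolding q_def by (metis append_butlast_last_id)
  have "q \<noteq> []" using pq p ne by auto
  then have "q \<in> dpaths L V v0 v (last q)" "dedge L V v0 (last q) (v0 l)"
    using p(2,4) unfolding pq dpaths_def by (auto simp: successively_append_iff)
  then show "p \<in> (\<lambda>q. q @ [v0 l]) ` (\<Union>w\<in>V l - {v0 l}. dpaths L V v0 v w)"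
    using pq dedge_v0_iff[OF l] by blast
next
  fix p assume "p \<in> (\<lambda>q. q @ [v0 l]) ` (\<Union>w\<in>V l - {v0 l}. dpaths L V v0 v w)"
  then obtain q w where q: "p = q @ [v0 l]" "w \<in> V l - {v0 l}" "q \<in> dpaths L V v0 v w"
    by auto
  then have "dedge L V v0 w (v0 l)" using dedge_v0_iff[OF l] by auto
  then show "p \<in> dpaths L V v0 v (v0 l)"
    using q unfolding dpaths_def by (auto simp: successively_append_iff)
qed

lemma path_sign_sum_white:
  "u \<notin> black \<Longrightarrow> path_sign_sum L V v0 v u = (if v = u then 1 else 0)"
  unfolding path_sign_sum_def by (simp add: dpaths_to_white)

lemma path_sign_sum_v0:
  assumes l: "l \<in> {1..L}" and ne: "v \<noteq> v0 l"
  shows "path_sign_sum L V v0 v (v0 l) = - (\<Sum>w\<in>V l - {v0 l}. path_sign_sum L V v0 v w)"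
proof -
  have sign: "(-1::int) ^ length q = - ((-1) ^ (length q - 1))" if "q \<in> dpaths L V v0 v w" for q w
    using that unfolding dpaths_def by (cases q) auto
  have "path_sign_sum L V v0 v (v0 l)
      = (\<Sum>q\<in>(\<Union>w\<in>V l - {v0 l}. dpaths L V v0 v w). (-1::int) ^ length q)"
    unfolding path_sign_sum_def dpaths_to_v0[OF l ne]
    by (subst sum.reindex) (auto intro: inj_onI)
  also have "\<dots> = (\<Sum>w\<in>V l - {v0 l}. \<Sum>q\<in>dpaths L V v0 v w. (-1::int) ^ length q)"
  proof (rule sum.UNION_disjoint)
    show "\<forall>w\<in>V l - {v0 l}. \<forall>w'\<in>V l - {v0 l}. w \<noteq> w' \<longrightarrow> dpaths L V v0 v w \<inter> dpaths L V v0 v w' = {}"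
      unfolding dpaths_def by blast
  qed (simp_all add: finite_dpaths)
  also have "\<dots> = (\<Sum>w\<in>V l - {v0 l}. - path_sign_sum L V v0 v w)"
    unfolding path_sign_sum_def by (intro sum.cong refl) (simp add: sign sum_negf)
  finally show ?thesis by (simp add: sum_negf)
qed

lemma sum_path_sign_sum_V:
  assumes "v \<notin> black" "l \<in> {1..L}"
  shows "(\<Sum>u\<in>V l. path_sign_sum L V v0 v u) = 0"
proof -
  have "v \<noteq> v0 l" using assms by auto
  then show ?thesis
    using sum.remove[OF _ v0_mem_V[OF assms(2)], of "path_sign_sum L V v0 v"]
      path_sign_sum_v0[OF assms(2)] by simp
qed

lemma path_sign_sum_expansion_v0:
  fixes f :: "'v \<Rightarrow> 'a::comm_ring_1"
  assumes l: "l \<in> {1..L}" and block: "(\<Sum>w\<in>V l. f w) = 0"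
    and below: "\<And>w. w \<in> V l - {v0 l} \<Longrightarrow>
      f w = (\<Sum>v\<in>UNIV - black. f v * of_int (path_sign_sum L V v0 v w))"
  shows "f (v0 l) = (\<Sum>v\<in>UNIV - black. f v * of_int (path_sign_sum L V v0 v (v0 l)))"
proof -
  have "(\<Sum>v\<in>UNIV - black. f v * of_int (path_sign_sum L V v0 v (v0 l)))
      = (\<Sum>v\<in>UNIV - black. - (\<Sum>w\<in>V l - {v0 l}. f v * of_int (path_sign_sum L V v0 v w)))"
  proof (rule sum.cong[OF refl])
    fix v assume "v \<in> UNIV - black"
    then have "v \<noteq> v0 l" using l by auto
    then show "f v * of_int (path_sign_sum L V v0 v (v0 l))
        = - (\<Sum>w\<in>V l - {v0 l}. f v * of_int (path_sign_sum L V v0 v w))"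
      by (simp add: path_sign_sum_v0[OF l] sum_distrib_left)
  qed
  also have "\<dots> = - (\<Sum>w\<in>V l - {v0 l}. \<Sum>v\<in>UNIV - black. f v * of_int (path_sign_sum L V v0 v w))"
    unfolding sum_negf neg_equal_iff_equal by (rule sum.swap)
  also have "\<dots> = - (\<Sum>w\<in>V l - {v0 l}. f w)"
    by (intro arg_cong[where f=uminus] sum.cong refl) (simp add: below)
  also have "\<dots> = f (v0 l)"
    using sum.remove[OF _ v0_mem_V[OF l], of f] block by (simp add: add_eq_0_iff2)
  finally show ?thesis by simp
qed

lemma path_sign_sum_expansion:
  fixes f :: "'v \<Rightarrow> 'a::comm_ring_1"
  assumes blocks: "\<forall>l\<in>{1..L}. (\<Sum>w\<in>V l. f w) = 0"
  shows "f u = (\<Sum>v\<in>UNIV - black. f v * of_int (path_sign_sum L V v0 v u))"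
proof -
  let ?expands = "\<lambda>u. f u = (\<Sum>v\<in>UNIV - black. f v * of_int (path_sign_sum L V v0 v u))"
  have white: "?expands u" if "u \<notin> black" for u
    using that by (simp add: path_sign_sum_white if_distrib cong: if_cong)
  have "l \<in> {1..L} \<longrightarrow> ?expands (v0 l)" for l
  proof (induction l rule: less_induct)
    case (less l)
    show ?case
    proof
      assume l: "l \<in> {1..L}"
      show "?expands (v0 l)"
      proof (rule path_sign_sum_expansion_v0[OF l])
        fix w assume w: "w \<in> V l - {v0 l}"
        show "?expands w"
        proof (cases "w \<in> black")
          case True
          then obtain k where k: "k \<in> {1..L}" "w = v0 k" by auto
          then have "k < l" using v0_mem_V_imp_less[OF l k(1)] w by auto
          then show ?thesis using less k by blast
        qed (rule white)
      qed (use blocks l in blast)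
    qed
  qed
  then show ?thesis using white by (cases "u \<in> black") auto
qed

end

section \<open>The zero-energy states\<close>

lemma a_coef_eq:
  "a_coef L V v0 v \<sigma> (u, \<tau>) = (if \<tau> = \<sigma> then of_int (path_sign_sum L V v0 v u) else 0)"
  unfolding a_coef_def reach_def path_sign_sum_def by auto

lemma a_dag_vacuum_singleton:
  "a_dag L V v0 v \<sigma> vacuum {(u, \<tau>)} = (if \<tau> = \<sigma> then of_int (path_sign_sum L V v0 v u) else 0)"
  unfolding a_dag_def cre_comb_vacuum_singleton a_coef_eq by simp

lemma a_dag_vacuum_not_singleton:
  "\<forall>y. S \<noteq> {y} \<Longrightarrow> a_dag L V v0 v \<sigma> vacuum S = 0"
  unfolding a_dag_def by (rule cre_comb_vacuum_not_singleton)

locale hopping_model = graph_construction L V v0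
  for L and V :: "nat \<Rightarrow> 'v::{finite,linorder} set" and v0 +
  assumes all_vertices: "all_vertices L V = UNIV"
begin

lemma white_vertices_eq: "white_vertices L V v0 = UNIV - black"
  unfolding white_vertices_def all_vertices ..

lemma sum_of_int_path_sign_sum_V:
  assumes "v \<in> white_vertices L V v0" "l \<in> {1..L}"
  shows "(\<Sum>u\<in>V l. (of_int (path_sign_sum L V v0 v u) :: complex)) = 0"
  using sum_path_sign_sum_V[of v l] assms white_vertices_eq by (simp flip: of_int_sum)

lemma anticomm_a_dag_b_op:
  assumes "v \<in> white_vertices L V v0" "l \<in> {1..L}"
  shows "anticomm (a_dag L V v0 v \<sigma>) (b_op V l \<sigma>) = (\<lambda>\<psi> S. 0)"
proof -
  have "(\<Sum>x\<in>UNIV. cnj (a_coef L V v0 v \<sigma> x) * b_coef V l \<sigma> x)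
      = (\<Sum>x\<in>UNIV. if snd x = \<sigma> \<and> fst x \<in> V l then (of_int (path_sign_sum L V v0 v (fst x)) :: complex) else 0)"
    by (rule sum.cong) (auto simp: a_coef_eq b_coef_def)
  also have "\<dots> = (\<Sum>u\<in>V l. of_int (path_sign_sum L V v0 v u))"
    by (rule sum_fixed_spin)
  also have "\<dots> = 0"
    by (rule sum_of_int_path_sign_sum_V[OF assms])
  finally show ?thesis
    unfolding a_dag_def b_op_def anticomm_cre_comb_ann_comb by simp
qed

lemma anticomm_cre_a_op:
  assumes "u \<in> white_vertices L V v0"
  shows "anticomm (cre (u, \<sigma>)) (a_op L V v0 v \<sigma>) = (if u = v then (\<lambda>\<psi>. \<psi>) else (\<lambda>\<psi> S. 0))"
proof -
  have "path_sign_sum L V v0 v u = (if v = u then 1 else 0)"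
    using assms path_sign_sum_white unfolding white_vertices_eq by blast
  then have "anticomm (cre (u, \<sigma>)) (a_op L V v0 v \<sigma>) \<psi> S = (if u = v then \<psi> S else 0)" for \<psi> S
    unfolding a_op_def anticomm_cre_ann_comb a_coef_eq by auto
  then show ?thesis by (cases "u = v") (simp_all add: ext)
qed

lemma a_dag_vacuum_mem_zero_energy_space:
  assumes "t > 0" "v \<in> white_vertices L V v0"
  shows "a_dag L V v0 v \<sigma> vacuum \<in> zero_energy_space t L V \<sigma>"
proof -
  have "a_dag L V v0 v \<sigma> vacuum \<in> one_electron_sector L V \<sigma>"
    unfolding one_electron_sector_def all_vertices
  proof (intro CollectI allI impI)
    fix S assume nonzero: "a_dag L V v0 v \<sigma> vacuum S \<noteq> 0"
    then have "\<exists>y. S = {y}" using a_dag_vacuum_not_singleton by blast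
    then obtain u \<tau> where S: "S = {(u, \<tau>)}" by auto
    moreover have "\<tau> = \<sigma>"
      using nonzero unfolding S a_dag_vacuum_singleton by (simp split: if_splits)
    ultimately show "\<exists>u\<in>UNIV. S = {(u, \<sigma>)}" by blast
  qed
  then show ?thesis
    using assms sum_of_int_path_sign_sum_V
    by (simp add: zero_energy_space_iff a_dag_vacuum_singleton)
qed

lemma zero_energy_space_expansion:
  assumes "t > 0" "\<psi> \<in> zero_energy_space t L V \<sigma>"
  shows "\<psi> = (\<lambda>S. \<Sum>v\<in>white_vertices L V v0. \<psi> {(v, \<sigma>)} * a_dag L V v0 v \<sigma> vacuum S)"
proof
  fix S
  have sector: "\<psi> \<in> one_electron_sector L V \<sigma>"
    and blocks: "\<forall>l\<in>{1..L}. (\<Sum>w\<in>V l. \<psi> {(w, \<sigma>)}) = 0"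
    using assms zero_energy_space_iff by blast+
  show "\<psi> S = (\<Sum>v\<in>white_vertices L V v0. \<psi> {(v, \<sigma>)} * a_dag L V v0 v \<sigma> vacuum S)"
  proof (cases "\<exists>u \<tau>. S = {(u, \<tau>)}")
    case True
    then obtain u \<tau> where S: "S = {(u, \<tau>)}" by blast
    show ?thesis
    proof (cases "\<tau> = \<sigma>")
      case True
      then show ?thesis
        using S path_sign_sum_expansion[OF blocks, of u]
        by (simp add: a_dag_vacuum_singleton white_vertices_eq)
    qed (simp add: S a_dag_vacuum_singleton one_electron_sector_other_spin[OF sector])
  next
    case False
    then have "\<forall>y. S \<noteq> {y}" by auto
    then show ?thesis
      by (simp add: a_dag_vacuum_not_singleton one_electron_sector_not_singleton[OF sector])
  qed
qed

lemma a_dag_vacuum_linear_independent: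
  assumes "\<forall>S. (\<Sum>v\<in>white_vertices L V v0. \<beta> v * a_dag L V v0 v \<sigma> vacuum S) = 0"
    and "u \<in> white_vertices L V v0"
  shows "\<beta> u = 0"
proof -
  have "a_dag L V v0 v \<sigma> vacuum {(u, \<sigma>)} = (if v = u then 1 else 0)" for v
    using assms(2) by (simp add: a_dag_vacuum_singleton path_sign_sum_white white_vertices_eq)
  then have "(\<Sum>v\<in>white_vertices L V v0. \<beta> v * a_dag L V v0 v \<sigma> vacuum {(u, \<sigma>)})
      = (\<Sum>v\<in>white_vertices L V v0. if v = u then \<beta> v else 0)"
    by (intro sum.cong) auto
  also have "\<dots> = \<beta> u"
    using assms(2) by simp
  finally show ?thesis using assms(1) by simp
qed

lemma a_dag_vacuum_basis:
  assumes "t > 0"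
  shows "is_basis_of (white_vertices L V v0) (\<lambda>v. a_dag L V v0 v \<sigma> vacuum) (zero_energy_space t L V \<sigma>)"
  unfolding is_basis_of_def
proof (intro conjI allI impI ballI)
  fix v assume "v \<in> white_vertices L V v0"
  then show "a_dag L V v0 v \<sigma> vacuum \<in> zero_energy_space t L V \<sigma>"
    by (rule a_dag_vacuum_mem_zero_energy_space[OF assms])
next
  fix \<beta> v assume "\<forall>S. (\<Sum>v\<in>white_vertices L V v0. \<beta> v * a_dag L V v0 v \<sigma> vacuum S) = 0"
    and "v \<in> white_vertices L V v0"
  then show "\<beta> v = 0" by (rule a_dag_vacuum_linear_independent)
next
  fix \<psi> assume "\<psi> \<in> zero_energy_space t L V \<sigma>"
  then have "\<psi> = (\<lambda>S. \<Sum>v\<in>white_vertices L V v0. \<psi> {(v, \<sigma>)} * a_dag L V v0 v \<sigma> vacuum S)"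
    by (rule zero_energy_space_expansion[OF assms])
  then show "\<exists>\<beta>. \<psi> = (\<lambda>S. \<Sum>v\<in>white_vertices L V v0. \<beta> v * a_dag L V v0 v \<sigma> vacuum S)"
    by (rule exI[where x="\<lambda>v. \<psi> {(v, \<sigma>)}"])
qed

lemma card_white_vertices: "card (white_vertices L V v0) = card (all_vertices L V) - L"
proof -
  have "card (white_vertices L V v0) = card (UNIV :: 'v set) - card black"
    unfolding white_vertices_eq by (rule card_Diff_subset) auto
  then show ?thesis using card_image[OF inj_on_v0] all_vertices by simp
qed

end

theorem mainTheorem3:
  fixes L :: nat and V :: "nat \<Rightarrow> 'v::{finite,linorder} set" and v0 :: "nat \<Rightarrow> 'v"
    and t :: real and \<sigma> :: bool
  assumes constr: "construction L V v0"
    and all: "all_vertices L V = UNIV"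
    and tpos: "t > 0"
  shows "(\<forall>v\<in>white_vertices L V v0. \<forall>l\<in>{1..L}.
            anticomm (a_dag L V v0 v \<sigma>) (b_op V l \<sigma>) = (\<lambda>\<psi> S. 0))
       \<and> (\<forall>u\<in>white_vertices L V v0. \<forall>v\<in>white_vertices L V v0.
            anticomm (cre (u, \<sigma>)) (a_op L V v0 v \<sigma>) = (if u = v then (\<lambda>\<psi>. \<psi>) else (\<lambda>\<psi> S. 0)))
       \<and> is_basis_of (white_vertices L V v0) (\<lambda>v. a_dag L V v0 v \<sigma> vacuum)
            (zero_energy_space t L V \<sigma>)
       \<and> card (white_vertices L V v0) = card (all_vertices L V) - L"
proof -
  interpret hopping_model L V v0
    using constr all by unfold_locales
  show ?thesis
    using anticomm_a_dag_b_op anticomm_cre_a_op a_dag_vacuum_basis[OF tpos] card_white_vertices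
    by blast
qed

end
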